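(* Let $n\ge2$, let $g^{ij}=\delta^{i,n+1-j}$ be the anti-diagonal constant contravariant metric on $\mathbb R^n$, and let $S_0=\sum_{i=0}^{n-2}\xi_i\mu^{(n;i)}$ with constants $\xi_i$ and $\xi_0\neq0$. Then: (1) if $n\not\equiv1\pmod 3$, there exists an orthogonal transformation (a change of coordinates preserving $g$) which brings $S_0$ to $\mu^{(n;0)}$; (2) if $n\equiv1\pmod3$ and $n\neq4$, there exists an orthogonal transformation which brings $S_0$ to $\mu^{(n;0)}+\kappa\,\mu^{(n;\frac{n-1}{3})}$ for some constant $\kappa$.
   Context: For integers $n\ge1$, $k\ge0$ the symmetric bivector $\mu^{(n;k)}$ has components $\mu^{(n;k)ij}=[3(i+j)-2(n+2-k)]\,u^{i+j-1+k}$, $i,j=1,\dots,n$, with the convention $u^\beta\equiv0$ for $\beta>n$. Bivectors are transformed by coordinate changes in the usual tensorial way. *)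

theory Defs
  imports Complex_Main
begin

text \<open>Points of R^n are functions u :: nat \<Rightarrow> real, only coordinates 1..n matter.
  A bivector field is S :: (nat \<Rightarrow> real) \<Rightarrow> nat \<Rightarrow> nat \<Rightarrow> real, S u i j = S^{ij}(u),
  indices i, j in 1..n.\<close>

definition mu :: "nat \<Rightarrow> nat \<Rightarrow> (nat \<Rightarrow> real) \<Rightarrow> nat \<Rightarrow> nat \<Rightarrow> real" where
  "mu n k u i j =
     (if i + j - 1 + k \<le> n
      then (3 * (real i + real j) - 2 * (real n + 2 - real k)) * u (i + j - 1 + k)
      else 0)"

definition gmet :: "nat \<Rightarrow> nat \<Rightarrow> nat \<Rightarrow> real" where
  "gmet n i j = (if i + j = n + 1 then 1 else 0)"

text \<open>Linear change of coordinates v^a = sum_i A a i u^i preserving g (tensorial law).\<close>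
definition orthogonal_g :: "nat \<Rightarrow> (nat \<Rightarrow> nat \<Rightarrow> real) \<Rightarrow> bool" where
  "orthogonal_g n A \<longleftrightarrow>
     (\<forall>a\<in>{1..n}. \<forall>b\<in>{1..n}.
        (\<Sum>i=1..n. \<Sum>j=1..n. A a i * A b j * gmet n i j) = gmet n a b)"

definition transforms_to ::
  "nat \<Rightarrow> (nat \<Rightarrow> nat \<Rightarrow> real) \<Rightarrow> ((nat \<Rightarrow> real) \<Rightarrow> nat \<Rightarrow> nat \<Rightarrow> real)
       \<Rightarrow> ((nat \<Rightarrow> real) \<Rightarrow> nat \<Rightarrow> nat \<Rightarrow> real) \<Rightarrow> bool" where
  "transforms_to n A S T \<longleftrightarrow>
     (\<forall>u. \<forall>a\<in>{1..n}. \<forall>b\<in>{1..n}.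
        T (\<lambda>c. \<Sum>i=1..n. A c i * u i) a b
          = (\<Sum>i=1..n. \<Sum>j=1..n. A a i * A b j * S u i j))"

end

theory Submission
  imports Defs "HOL-Computational_Algebra.Formal_Power_Series"
begin

text \<open>
  The diagonal change \<open>u\<^sub>a \<mapsto> \<rho> \<tau>^(a-1) u\<^sub>a\<close> with \<open>\<rho>\<^sup>2 \<tau>^(n-1) = 1\<close> preserves \<open>g\<close> and multiplies
  \<open>\<mu>(n;k)\<close> by \<open>\<rho>/\<tau>^k\<close>, so the leading coefficient can be made \<open>1\<close>. For \<open>r \<ge> 1\<close> and any \<open>z\<close>, the
  unipotent change \<open>u\<^sub>a \<mapsto> \<Sum>\<^sub>p z^p (-w\<^sub>a choose p) u\<^bsub>a+pr\<^esub>\<close>, \<open>w\<^sub>a = (a - 1 - (n-1-r)/2)/r\<close>,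
  preserves \<open>g\<close> and sends \<open>\<mu>(n;k)\<close> to \<open>\<Sum>\<^sub>P z^P (-1)^P (-A\<^sub>k choose P) \<mu>(n;k+Pr)\<close> with
  \<open>A\<^sub>k = (n-1+2k-3r)/(2r)\<close>. Both facts are Vandermonde-type identities, because the components
  of \<open>g\<close> and of every \<open>\<mu>(n;k)\<close> depend only on \<open>i + j\<close>. This change keeps the coefficients of
  \<open>\<mu>(n;j)\<close> for \<open>j < r\<close> and adds \<open>z A\<^sub>0\<close> to that of \<open>\<mu>(n;r)\<close>, which can thus be killed unless
  \<open>A\<^sub>0 = 0\<close>, i.e. \<open>n = 3r + 1\<close>. Eliminating \<open>r = 1, \<dots>, n - 1\<close> in turn leaves \<open>\<mu>(n;0)\<close>, plus a
  multiple of \<open>\<mu>(n;(n-1)/3)\<close> when \<open>n mod 3 = 1\<close>.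
\<close>

lemma gbinomial_Vandermonde_neg_shift:
  fixes A y :: real
  shows "(\<Sum>P=0..L. (-1)^P * ((-A) gchoose P) * ((y - A - 1 - of_nat P) gchoose (L - P)))
         = (y - 1) gchoose L"
proof -
  have "(\<Sum>P=0..L. (-1)^P * ((-A) gchoose P) * ((y - A - 1 - of_nat P) gchoose (L - P)))
      = (\<Sum>P=0..L. (-1)^L * (((-A) gchoose P) * ((of_nat L - y + A) gchoose (L - P))))"
  proof (rule sum.cong[OF refl])
    fix P assume P: "P \<in> {0..L}"
    have upper: "of_nat (L - P) - (y - A - 1 - of_nat P) - 1 = (of_nat L - y + A :: real)"
      using P by (simp add: of_nat_diff)
    have "(y - A - 1 - of_nat P) gchoose (L - P)
        = (-1)^(L-P) * ((of_nat L - y + A) gchoose (L - P))"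
      by (subst gbinomial_negated_upper) (simp only: upper)
    moreover have "(-1::real)^P * (-1)^(L-P) = (-1)^L"
      using P by (simp add: power_add[symmetric])
    ultimately show "(-1)^P * ((-A) gchoose P) * ((y - A - 1 - of_nat P) gchoose (L - P))
      = (-1)^L * (((-A) gchoose P) * ((of_nat L - y + A) gchoose (L - P)))"
      by (metis (no_types, lifting) mult.assoc mult.left_commute)
  qed
  also have "\<dots> = (-1)^L * ((of_nat L - y) gchoose L)"
    by (simp add: sum_distrib_left[symmetric] gbinomial_Vandermonde)
  also have "\<dots> = (y - 1) gchoose L"
    by (subst (2) gbinomial_negated_upper) simp
  finally show ?thesis .
qed

lemma gbinomial_Vandermonde_neg_shift_weighted:
  fixes A y :: real
  shows "(\<Sum>P=0..Suc L. of_nat P * ((-1)^P * ((-A) gchoose P))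
            * ((y - A - 1 - of_nat P) gchoose (Suc L - P)))
         = A * ((y - 1) gchoose L)"
proof -
  have absorb: "of_nat (Suc P) * ((-1)^Suc P * ((-A) gchoose Suc P))
              = A * ((-1)^P * ((-(A+1)) gchoose P))" for P
  proof -
    have "of_nat (Suc P) * ((-A) gchoose Suc P) = - A * ((-(A+1)) gchoose P)"
      using gbinomial_absorption[of P "-A"] by simp
    then show ?thesis
      by (simp only: mult.left_commute[of "of_nat (Suc P)"]) simp
  qed
  have "(\<Sum>P=0..Suc L. of_nat P * ((-1)^P * ((-A) gchoose P))
            * ((y - A - 1 - of_nat P) gchoose (Suc L - P)))
      = (\<Sum>P=0..L. of_nat (Suc P) * ((-1)^Suc P * ((-A) gchoose Suc P))
            * ((y - A - 1 - of_nat (Suc P)) gchoose (Suc L - Suc P)))"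
    by (subst sum.atLeast0_atMost_Suc_shift) (simp only: of_nat_0 mult_zero_left add_0 o_def)
  also have "\<dots> = (\<Sum>P=0..L. A * ((-1)^P * ((-(A+1)) gchoose P)
            * ((y - (A+1) - 1 - of_nat P) gchoose (L - P))))"
  proof (rule sum.cong[OF refl])
    fix P
    have "y - A - 1 - of_nat (Suc P) = y - (A+1) - 1 - of_nat P" by simp
    then show "of_nat (Suc P) * ((-1)^Suc P * ((-A) gchoose Suc P))
            * ((y - A - 1 - of_nat (Suc P)) gchoose (Suc L - Suc P))
        = A * ((-1)^P * ((-(A+1)) gchoose P) * ((y - (A+1) - 1 - of_nat P) gchoose (L - P)))"
      by (simp only: absorb diff_Suc_Suc mult.assoc)
  qed
  also have "\<dots> = A * ((y - 1) gchoose L)"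
    by (simp only: sum_distrib_left[symmetric] gbinomial_Vandermonde_neg_shift)
  finally show ?thesis .
qed

lemma gbinomial_shift_identity:
  fixes A y C r :: real
  assumes "C = 2*r*A - 3*r*y"
  shows "(\<Sum>P=0..L. (-1)^P * ((-A) gchoose P) * (C + 2 * of_nat P * r)
            * ((y - A - 1 - of_nat P) gchoose (L - P)))
         = (C + 3 * of_nat L * r) * (y gchoose L)"
proof (cases L)
  case 0
  then show ?thesis by simp
next
  case (Suc L')
  have "(\<Sum>P=0..L. (-1)^P * ((-A) gchoose P) * (C + 2 * of_nat P * r)
            * ((y - A - 1 - of_nat P) gchoose (L - P)))
     = C * (\<Sum>P=0..L. (-1)^P * ((-A) gchoose P) * ((y - A - 1 - of_nat P) gchoose (L - P)))
       + 2 * r * (\<Sum>P=0..L. of_nat P * ((-1)^P * ((-A) gchoose P))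
            * ((y - A - 1 - of_nat P) gchoose (L - P)))"
    by (simp add: sum_distrib_left sum.distrib[symmetric] algebra_simps)
  also have "\<dots> = C * ((y-1) gchoose Suc L') + 2 * r * A * ((y-1) gchoose L')"
    unfolding Suc gbinomial_Vandermonde_neg_shift gbinomial_Vandermonde_neg_shift_weighted
    by (simp only: mult.assoc)
  also have "\<dots> = C * ((y-1) gchoose Suc L') + C * ((y-1) gchoose L')
                     + 3 * r * (y * ((y-1) gchoose L'))"
    unfolding assms by (simp add: algebra_simps)
  also have "\<dots> = C * (y gchoose L) + 3 * r * (of_nat L * (y gchoose L))"
    using gbinomial_Suc_Suc[of "y-1" L'] gbinomial_absorption[of L' y] Suc
    by (simp add: algebra_simps)
  also have "\<dots> = (C + 3 * of_nat L * r) * (y gchoose L)"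
    by (simp add: algebra_simps)
  finally show ?thesis .
qed

lemma gbinomial_pred_self: "(of_nat L - 1 :: real) gchoose L = (if L = 0 then 1 else 0)"
proof (cases L)
  case (Suc L')
  then have "(of_nat L - 1 :: real) gchoose L = of_nat (L' choose L)"
    by (simp add: binomial_gbinomial)
  then show ?thesis using Suc by simp
qed simp

definition bivector_transform ::
  "nat \<Rightarrow> (nat \<Rightarrow> nat \<Rightarrow> real) \<Rightarrow> (nat \<Rightarrow> nat \<Rightarrow> real) \<Rightarrow> nat \<Rightarrow> nat \<Rightarrow> real" where
  "bivector_transform n A M a b = (\<Sum>i=1..n. \<Sum>j=1..n. A a i * A b j * M i j)"

definition matrix_mult ::
  "nat \<Rightarrow> (nat \<Rightarrow> nat \<Rightarrow> real) \<Rightarrow> (nat \<Rightarrow> nat \<Rightarrow> real) \<Rightarrow> nat \<Rightarrow> nat \<Rightarrow> real" where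
  "matrix_mult n B A c i = (\<Sum>l=1..n. B c l * A l i)"

lemma orthogonal_g_iff_bivector_transform:
  "orthogonal_g n A \<longleftrightarrow> (\<forall>a\<in>{1..n}. \<forall>b\<in>{1..n}. bivector_transform n A (gmet n) a b = gmet n a b)"
  unfolding orthogonal_g_def bivector_transform_def ..

lemma transforms_to_iff_bivector_transform:
  "transforms_to n A S T \<longleftrightarrow>
     (\<forall>u. \<forall>a\<in>{1..n}. \<forall>b\<in>{1..n}.
        T (\<lambda>c. \<Sum>i=1..n. A c i * u i) a b = bivector_transform n A (S u) a b)"
  unfolding transforms_to_def bivector_transform_def ..

lemma bivector_transform_cong:
  "(\<And>i j. i \<in> {1..n} \<Longrightarrow> j \<in> {1..n} \<Longrightarrow> M i j = M' i j)
   \<Longrightarrow> bivector_transform n A M a b = bivector_transform n A M' a b"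
  unfolding bivector_transform_def by (intro sum.cong refl) simp

lemma bivector_transform_matrix_mult:
  "bivector_transform n (matrix_mult n B A) M a b
     = bivector_transform n B (bivector_transform n A M) a b"
proof -
  have "bivector_transform n (matrix_mult n B A) M a b
      = (\<Sum>i=1..n. \<Sum>j=1..n. \<Sum>a'=1..n. \<Sum>b'=1..n. B a a' * B b b' * (A a' i * A b' j * M i j))"
    unfolding bivector_transform_def matrix_mult_def
    by (simp only: sum_distrib_left sum_distrib_right)
      (rule sum.cong[OF refl], rule sum.cong[OF refl], subst sum.swap, simp add: mult_ac)
  also have "\<dots> = (\<Sum>a'=1..n. \<Sum>b'=1..n. \<Sum>i=1..n. \<Sum>j=1..n. B a a' * B b b' * (A a' i * A b' j * M i j))"
    by (subst (2) sum.swap, subst sum.swap)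
      (rule sum.cong[OF refl], subst sum.swap, rule sum.cong[OF refl], rule sum.swap)
  also have "\<dots> = bivector_transform n B (bivector_transform n A M) a b"
    unfolding bivector_transform_def by (simp add: sum_distrib_left)
  finally show ?thesis .
qed

lemma orthogonal_g_matrix_mult:
  assumes "orthogonal_g n A" "orthogonal_g n B"
  shows "orthogonal_g n (matrix_mult n B A)"
  unfolding orthogonal_g_iff_bivector_transform
proof (intro ballI)
  fix a b assume "a \<in> {1..n}" "b \<in> {1..n}"
  then show "bivector_transform n (matrix_mult n B A) (gmet n) a b = gmet n a b"
    using assms unfolding bivector_transform_matrix_mult orthogonal_g_iff_bivector_transform
    by (subst bivector_transform_cong[of n _ "gmet n"]) auto
qed

lemma transforms_to_matrix_mult:
  assumes "transforms_to n A S T" "transforms_to n B T R"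
  shows "transforms_to n (matrix_mult n B A) S R"
  unfolding transforms_to_iff_bivector_transform
proof (intro allI ballI)
  fix u a b assume ab: "a \<in> {1..n}" "b \<in> {1..n}"
  define v where "v l = (\<Sum>i=1..n. A l i * u i)" for l
  have "(\<lambda>c. \<Sum>i=1..n. matrix_mult n B A c i * u i) = (\<lambda>c. \<Sum>l=1..n. B c l * v l)"
    unfolding matrix_mult_def v_def sum_distrib_right sum_distrib_left
    by (subst sum.swap) (simp add: mult.assoc)
  then have "R (\<lambda>c. \<Sum>i=1..n. matrix_mult n B A c i * u i) a b = bivector_transform n B (T v) a b"
    using assms(2) ab unfolding transforms_to_iff_bivector_transform by simp
  also have "\<dots> = bivector_transform n B (bivector_transform n A (S u)) a b"
    using assms(1) unfolding transforms_to_iff_bivector_transform v_def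
    by (intro bivector_transform_cong) auto
  finally show "R (\<lambda>c. \<Sum>i=1..n. matrix_mult n B A c i * u i) a b
      = bivector_transform n (matrix_mult n B A) (S u) a b"
    by (simp only: bivector_transform_matrix_mult)
qed

lemma transforms_to_cong:
  assumes "transforms_to n A S T" "\<And>u a b. a \<in> {1..n} \<Longrightarrow> b \<in> {1..n} \<Longrightarrow> T u a b = T' u a b"
  shows "transforms_to n A S T'"
  using assms unfolding transforms_to_def by auto

lemma transforms_to_sum:
  assumes "\<And>k. k \<in> K \<Longrightarrow> transforms_to n A (S k) (T k)"
  shows "transforms_to n A (\<lambda>u i j. \<Sum>k\<in>K. c k * S k u i j) (\<lambda>u i j. \<Sum>k\<in>K. c k * T k u i j)"
  unfolding transforms_to_iff_bivector_transform
proof (intro allI ballI)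
  fix u a b assume "a \<in> {1..n}" "b \<in> {1..n}"
  then have "(\<Sum>k\<in>K. c k * T k (\<lambda>c. \<Sum>i=1..n. A c i * u i) a b)
     = (\<Sum>k\<in>K. c k * bivector_transform n A (S k u) a b)"
    using assms unfolding transforms_to_iff_bivector_transform by (intro sum.cong refl) auto
  also have "\<dots> = bivector_transform n A (\<lambda>i j. \<Sum>k\<in>K. c k * S k u i j) a b"
    unfolding bivector_transform_def sum_distrib_left
    by (subst sum.swap, intro sum.cong refl, subst sum.swap) (simp add: mult_ac)
  finally show "(\<Sum>k\<in>K. c k * T k (\<lambda>c. \<Sum>i=1..n. A c i * u i) a b)
     = bivector_transform n A (\<lambda>i j. \<Sum>k\<in>K. c k * S k u i j) a b" .
qed

definition diag_scaling :: "real \<Rightarrow> real \<Rightarrow> nat \<Rightarrow> nat \<Rightarrow> real" where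
  "diag_scaling \<rho> \<tau> a i = (if a = i then \<rho> * \<tau>^(a-1) else 0)"

lemma sum_diag_scaling_row:
  "a \<in> {1..n} \<Longrightarrow> (\<Sum>i=1..n. diag_scaling \<rho> \<tau> a i * f i) = \<rho> * \<tau>^(a-1) * f a"
proof -
  assume "a \<in> {1..n}"
  have "(\<Sum>i=1..n. diag_scaling \<rho> \<tau> a i * f i) = (\<Sum>i=1..n. if a = i then \<rho> * \<tau>^(a-1) * f i else 0)"
    unfolding diag_scaling_def by (intro sum.cong refl) auto
  with \<open>a \<in> {1..n}\<close> show ?thesis by simp
qed

lemma bivector_transform_diag_scaling:
  assumes "a \<in> {1..n}" "b \<in> {1..n}"
  shows "bivector_transform n (diag_scaling \<rho> \<tau>) M a b = \<rho>^2 * \<tau>^(a-1) * \<tau>^(b-1) * M a b"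
proof -
  have "bivector_transform n (diag_scaling \<rho> \<tau>) M a b
      = (\<Sum>i=1..n. diag_scaling \<rho> \<tau> a i * (\<Sum>j=1..n. diag_scaling \<rho> \<tau> b j * M i j))"
    unfolding bivector_transform_def by (simp add: sum_distrib_left mult.assoc)
  also have "\<dots> = (\<Sum>i=1..n. diag_scaling \<rho> \<tau> a i * (\<rho> * \<tau>^(b-1) * M i b))"
    using assms(2) by (simp only: sum_diag_scaling_row)
  also have "\<dots> = \<rho> * \<tau>^(a-1) * (\<rho> * \<tau>^(b-1) * M a b)"
    using assms(1) by (rule sum_diag_scaling_row)
  finally show ?thesis by (simp add: power2_eq_square mult_ac)
qed

lemma orthogonal_g_diag_scaling:
  assumes "\<rho>^2 * \<tau>^(n-1) = 1"
  shows "orthogonal_g n (diag_scaling \<rho> \<tau>)"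
  unfolding orthogonal_g_iff_bivector_transform
proof (intro ballI)
  fix a b assume ab: "a \<in> {1..n}" "b \<in> {1..n}"
  have "\<tau>^(a-1) * \<tau>^(b-1) = \<tau>^(n-1)" if "a + b = n + 1"
    using ab that by (simp flip: power_add)
  then show "bivector_transform n (diag_scaling \<rho> \<tau>) (gmet n) a b = gmet n a b"
    using ab assms by (simp add: bivector_transform_diag_scaling gmet_def mult.assoc)
qed

lemma transforms_to_diag_scaling_mu:
  assumes "\<tau> \<noteq> 0"
  shows "transforms_to n (diag_scaling \<rho> \<tau>) (mu n k) (\<lambda>u i j. \<rho> / \<tau>^k * mu n k u i j)"
  unfolding transforms_to_iff_bivector_transform
proof (intro allI ballI)
  fix u a b assume ab: "a \<in> {1..n}" "b \<in> {1..n}"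
  show "\<rho> / \<tau>^k * mu n k (\<lambda>c. \<Sum>i=1..n. diag_scaling \<rho> \<tau> c i * u i) a b
      = bivector_transform n (diag_scaling \<rho> \<tau>) (mu n k u) a b"
  proof (cases "a + b - 1 + k \<le> n")
    case True
    have "a + b - 1 + k - 1 = (a-1) + (b-1) + k"
      using ab by auto
    then have "\<tau>^(a + b - 1 + k - 1) = \<tau>^(a-1) * \<tau>^(b-1) * \<tau>^k"
      by (simp add: power_add)
    moreover have "a + b - 1 + k \<in> {1..n}"
      using True ab by auto
    ultimately show ?thesis
      unfolding bivector_transform_diag_scaling[OF ab] mu_def
      using True sum_diag_scaling_row assms by (simp add: power2_eq_square field_simps)
  qed (simp add: bivector_transform_diag_scaling[OF ab] mu_def)
qed

lemma sum_atMost_square_antidiagonals: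
  fixes h :: "nat \<Rightarrow> nat \<Rightarrow> 'a::comm_monoid_add"
  assumes "\<And>p q. n < p + q \<Longrightarrow> h p q = 0"
  shows "(\<Sum>p\<le>n. \<Sum>q\<le>n. h p q) = (\<Sum>L\<le>n. \<Sum>p\<le>L. h p (L - p))"
proof -
  have "(\<Sum>p\<le>n. \<Sum>q\<le>n. h p q) = (\<Sum>(p,q)\<in>{..n}\<times>{..n}. h p q)"
    by (simp add: sum.cartesian_product)
  also have "\<dots> = (\<Sum>(p,q)\<in>{(p,q). p+q \<le> n}. h p q)"
  proof (rule sum.mono_neutral_right)
    show "\<forall>x\<in>{..n} \<times> {..n} - {(p, q). p + q \<le> n}. (case x of (p, q) \<Rightarrow> h p q) = 0"
    proof
      fix x assume "x \<in> {..n} \<times> {..n} - {(p, q). p + q \<le> n}"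
      then obtain p q where "x = (p, q)" "n < p + q" by auto
      then show "(case x of (p, q) \<Rightarrow> h p q) = 0" using assms by simp
    qed
  qed auto
  also have "\<dots> = (\<Sum>L\<le>n. \<Sum>p\<le>L. h p (L - p))"
    by (rule sum.triangle_reindex_eq)
  finally show ?thesis .
qed

text \<open>\<open>w\<^sub>a\<close> is chosen so that \<open>-(w\<^sub>a + w\<^sub>b) = L - 1\<close> on the anti-diagonal
  \<open>a + b + L r = n + 1\<close>, where \<open>(L - 1 choose L)\<close> vanishes unless \<open>L = 0\<close>.\<close>

definition shift_exponent :: "nat \<Rightarrow> nat \<Rightarrow> nat \<Rightarrow> real" where
  "shift_exponent n r a = (real a - 1 - (real n - 1 - real r) / 2) / real r"

definition shift_matrix :: "nat \<Rightarrow> nat \<Rightarrow> real \<Rightarrow> nat \<Rightarrow> nat \<Rightarrow> real" where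
  "shift_matrix n r z a i =
     (\<Sum>p\<le>n. if i = a + p*r then z^p * ((- shift_exponent n r a) gchoose p) else 0)"

lemma sum_shift_matrix_row:
  assumes "1 \<le> a"
  shows "(\<Sum>i=1..n. shift_matrix n r z a i * f i)
       = (\<Sum>p\<le>n. if a + p*r \<le> n
                  then z^p * ((- shift_exponent n r a) gchoose p) * f (a + p*r) else 0)"
proof -
  have "(\<Sum>i=1..n. shift_matrix n r z a i * f i)
      = (\<Sum>p\<le>n. \<Sum>i=1..n. if i = a + p*r then z^p * ((- shift_exponent n r a) gchoose p) * f i else 0)"
    unfolding shift_matrix_def sum_distrib_right by (subst sum.swap) (intro sum.cong refl, simp)
  also have "\<dots> = (\<Sum>p\<le>n. if a + p*r \<le> n
                  then z^p * ((- shift_exponent n r a) gchoose p) * f (a + p*r) else 0)"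
    using assms by (intro sum.cong refl) (simp add: sum.delta)
  finally show ?thesis .
qed

lemma bivector_transform_shift_matrix_hankel_double_sum:
  assumes ab: "a \<in> {1..n}" "b \<in> {1..n}" and H: "\<And>s. n + 1 < s \<Longrightarrow> H s = 0"
  shows "bivector_transform n (shift_matrix n r z) (\<lambda>i j. H (i + j)) a b
       = (\<Sum>p\<le>n. \<Sum>q\<le>n. z^(p+q) * (((- shift_exponent n r a) gchoose p)
            * ((- shift_exponent n r b) gchoose q)) * H (a + b + (p+q)*r))"
proof -
  define ga where "ga p = (- shift_exponent n r a) gchoose p" for p
  define gb where "gb q = (- shift_exponent n r b) gchoose q" for q
  have inner: "(\<Sum>j=1..n. shift_matrix n r z b j * H (i + j))
      = (\<Sum>q\<le>n. if b + q*r \<le> n then z^q * gb q * H (i + (b + q*r)) else 0)" for i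
    unfolding gb_def using ab by (intro sum_shift_matrix_row) auto
  have "bivector_transform n (shift_matrix n r z) (\<lambda>i j. H (i + j)) a b
      = (\<Sum>i=1..n. shift_matrix n r z a i * (\<Sum>j=1..n. shift_matrix n r z b j * H (i + j)))"
    unfolding bivector_transform_def by (simp add: sum_distrib_left mult.assoc)
  also have "\<dots> = (\<Sum>p\<le>n. if a + p*r \<le> n then z^p * ga p *
      (\<Sum>q\<le>n. if b + q*r \<le> n then z^q * gb q * H (a + p*r + (b + q*r)) else 0) else 0)"
    unfolding inner ga_def using ab by (intro sum_shift_matrix_row) auto
  also have "\<dots> = (\<Sum>p\<le>n. \<Sum>q\<le>n. z^(p+q) * (ga p * gb q) * H (a + b + (p+q)*r))"
  proof (intro sum.cong refl)
    fix p
    have outside: "H (a + b + (p+q)*r) = 0" if "\<not> a + p*r \<le> n \<or> \<not> b + q*r \<le> n" for q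
      using that ab by (intro H) (auto simp: algebra_simps)
    have "(if b + q*r \<le> n then z^q * gb q * H (a + p*r + (b + q*r)) else 0)
        = z^q * gb q * H (a + b + (p+q)*r)" for q
      using outside[of q] by (simp add: algebra_simps)
    then show "(if a + p*r \<le> n then z^p * ga p *
        (\<Sum>q\<le>n. if b + q*r \<le> n then z^q * gb q * H (a + p*r + (b + q*r)) else 0) else 0)
      = (\<Sum>q\<le>n. z^(p+q) * (ga p * gb q) * H (a + b + (p+q)*r))"
      using outside by (auto simp: sum_distrib_left power_add mult_ac intro!: sum.cong)
  qed
  finally show ?thesis
    unfolding ga_def gb_def .
qed

lemma bivector_transform_shift_matrix_hankel:
  assumes r: "0 < r" and ab: "a \<in> {1..n}" "b \<in> {1..n}"
    and H: "\<And>s. n + 1 < s \<Longrightarrow> H s = 0"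
  shows "bivector_transform n (shift_matrix n r z) (\<lambda>i j. H (i + j)) a b
       = (\<Sum>L\<le>n. z^L * ((- shift_exponent n r a - shift_exponent n r b) gchoose L)
                   * H (a + b + L*r))"
proof -
  define h where "h p q = z^(p+q) * (((- shift_exponent n r a) gchoose p)
      * ((- shift_exponent n r b) gchoose q)) * H (a + b + (p+q)*r)" for p q
  have "bivector_transform n (shift_matrix n r z) (\<lambda>i j. H (i + j)) a b
      = (\<Sum>p\<le>n. \<Sum>q\<le>n. h p q)"
    unfolding h_def using ab H by (rule bivector_transform_shift_matrix_hankel_double_sum)
  also have "\<dots> = (\<Sum>L\<le>n. \<Sum>p\<le>L. h p (L - p))"
  proof (rule sum_atMost_square_antidiagonals)
    fix p q assume "n < p + q"
    moreover have "p + q \<le> (p+q)*r" using r by simp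
    moreover have "1 \<le> a" "1 \<le> b" using ab by auto
    ultimately have "n + 1 < a + b + (p+q)*r" by linarith
    then show "h p q = 0" unfolding h_def using H by simp
  qed
  also have "\<dots> = (\<Sum>L\<le>n. z^L * (\<Sum>p=0..L. ((- shift_exponent n r a) gchoose p)
      * ((- shift_exponent n r b) gchoose (L - p))) * H (a + b + L*r))"
    unfolding h_def atLeast0AtMost sum_distrib_left sum_distrib_right
    by (intro sum.cong refl) simp
  finally show ?thesis
    unfolding gbinomial_Vandermonde by simp
qed

lemma shift_exponent_pair:
  assumes "0 < r"
  shows "- shift_exponent n r a - shift_exponent n r b = (real n + 1 - real a - real b) / real r - 1"
  using assms unfolding shift_exponent_def by (simp add: field_simps)

lemma orthogonal_g_shift_matrix:
  assumes r: "0 < r"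
  shows "orthogonal_g n (shift_matrix n r z)"
  unfolding orthogonal_g_iff_bivector_transform
proof (intro ballI)
  fix a b assume ab: "a \<in> {1..n}" "b \<in> {1..n}"
  have "gmet n = (\<lambda>i j. (\<lambda>s. if s = n + 1 then 1 else 0) (i + j))"
    unfolding gmet_def by (intro ext) simp
  then have "bivector_transform n (shift_matrix n r z) (gmet n) a b
      = (\<Sum>L\<le>n. z^L * ((- shift_exponent n r a - shift_exponent n r b) gchoose L)
                 * (if a + b + L*r = n + 1 then 1 else 0))"
    using bivector_transform_shift_matrix_hankel[OF r ab, of "\<lambda>s. if s = n + 1 then 1 else 0"]
    by simp
  also have "\<dots> = (\<Sum>L\<le>n. if L = 0 then gmet n a b else 0)"
  proof (intro sum.cong refl)
    fix L
    show "z^L * ((- shift_exponent n r a - shift_exponent n r b) gchoose L)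
            * (if a + b + L*r = n + 1 then 1 else 0) = (if L = 0 then gmet n a b else 0)"
    proof (cases "a + b + L*r = n + 1")
      case True
      then have "real n + 1 - real a - real b = real L * real r"
        by (simp flip: of_nat_add of_nat_mult)
      then have "- shift_exponent n r a - shift_exponent n r b = real L - 1"
        using r by (simp add: shift_exponent_pair)
      moreover have "L = 0 \<Longrightarrow> a + b = n + 1"
        using True by simp
      ultimately show ?thesis
        using True by (auto simp: gbinomial_pred_self gmet_def)
    qed (auto simp: gmet_def)
  qed
  also have "\<dots> = gmet n a b"
    by simp
  finally show "bivector_transform n (shift_matrix n r z) (gmet n) a b = gmet n a b" .
qed

definition shift_mu_exponent :: "nat \<Rightarrow> nat \<Rightarrow> nat \<Rightarrow> real" where
  "shift_mu_exponent n r k = (real n - 1 + 2 * real k - 3 * real r) / (2 * real r)"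

lemma shift_exponent_mu_index:
  assumes "0 < r" "1 \<le> a" "1 \<le> b"
  shows "- shift_exponent n r (a + b - 1 + k + P*r)
       = (- shift_exponent n r a - shift_exponent n r b) - shift_mu_exponent n r k - 1 - real P"
proof -
  have "real (a + b - 1 + k + P*r) = real a + real b - 1 + real k + real P * real r"
    using assms by (simp add: of_nat_diff)
  then show ?thesis
    using assms unfolding shift_exponent_def shift_mu_exponent_def by (simp add: field_simps)
qed

lemma sum_mu_shift_matrix_image:
  fixes k :: nat
  assumes r: "0 < r" and ab: "a \<in> {1..n}" "b \<in> {1..n}"
  defines "X \<equiv> \<lambda>L. a + b - 1 + k + L*r"
    and "C \<equiv> 3 * (real a + real b) - 2 * (real n + 2 - real k)"
  shows "(\<Sum>P\<le>n. z^P * e P * mu n (k + P*r) (\<lambda>c. \<Sum>i=1..n. shift_matrix n r z c i * u i) a b)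
       = (\<Sum>L\<le>n. if X L \<le> n then z^L * (\<Sum>P=0..L. e P * (C + 2 * real P * real r)
              * ((- shift_exponent n r (X P)) gchoose (L - P))) * u (X L) else 0)"
proof -
  define v where "v c = (\<Sum>i=1..n. shift_matrix n r z c i * u i)" for c
  define h where "h P Q = (if X (P+Q) \<le> n then z^(P+Q) * (e P * (C + 2 * real P * real r)
      * ((- shift_exponent n r (X P)) gchoose Q)) * u (X (P+Q)) else 0)" for P Q
  have X_add: "X P + Q*r = X (P+Q)" for P Q
    unfolding X_def by (simp add: algebra_simps)
  have "(\<Sum>P\<le>n. z^P * e P * mu n (k + P*r) v a b) = (\<Sum>P\<le>n. \<Sum>Q\<le>n. h P Q)"
  proof (intro sum.cong refl)
    fix P
    have mu: "mu n (k + P*r) v a b = (if X P \<le> n then (C + 2 * real P * real r) * v (X P) else 0)"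
      unfolding mu_def X_def C_def by (simp add: algebra_simps)
    have "1 \<le> X P"
      unfolding X_def using ab by auto
    then have v: "v (X P) = (\<Sum>Q\<le>n. if X (P+Q) \<le> n
        then z^Q * ((- shift_exponent n r (X P)) gchoose Q) * u (X (P+Q)) else 0)"
      unfolding v_def X_add[symmetric] by (rule sum_shift_matrix_row)
    have "\<not> X P \<le> n \<Longrightarrow> \<not> X (P+Q) \<le> n" for Q
      using X_add[of P Q] by linarith
    then show "z^P * e P * mu n (k + P*r) v a b = (\<Sum>Q\<le>n. h P Q)"
      unfolding mu v h_def
      by (auto simp: sum_distrib_left power_add mult_ac intro!: sum.cong sum.neutral)
  qed
  also have "\<dots> = (\<Sum>L\<le>n. \<Sum>P\<le>L. h P (L - P))"
  proof (rule sum_atMost_square_antidiagonals)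
    fix P Q assume "n < P + Q"
    moreover have "P + Q \<le> (P+Q)*r" using r by simp
    ultimately have "n < X (P+Q)" unfolding X_def by linarith
    then show "h P Q = 0" unfolding h_def by simp
  qed
  also have "\<dots> = (\<Sum>L\<le>n. if X L \<le> n then z^L * (\<Sum>P=0..L. e P * (C + 2 * real P * real r)
              * ((- shift_exponent n r (X P)) gchoose (L - P))) * u (X L) else 0)"
    unfolding h_def atLeast0AtMost sum_distrib_left sum_distrib_right
    by (intro sum.cong refl) (auto intro!: sum.cong)
  finally show ?thesis
    unfolding v_def .
qed

lemma bivector_transform_shift_matrix_mu:
  fixes k :: nat
  assumes r: "0 < r" and ab: "a \<in> {1..n}" "b \<in> {1..n}"
  defines "X \<equiv> \<lambda>L. a + b - 1 + k + L*r"
    and "C \<equiv> 3 * (real a + real b) - 2 * (real n + 2 - real k)"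
  shows "bivector_transform n (shift_matrix n r z) (mu n k u) a b
       = (\<Sum>L\<le>n. if X L \<le> n
              then z^L * ((C + 3 * real L * real r)
                * ((- shift_exponent n r a - shift_exponent n r b) gchoose L)) * u (X L)
              else 0)"
proof -
  define H where "H s = (if s - 1 + k \<le> n
      then (3 * real s - 2 * (real n + 2 - real k)) * u (s - 1 + k) else 0)" for s
  have "bivector_transform n (shift_matrix n r z) (mu n k u) a b
      = bivector_transform n (shift_matrix n r z) (\<lambda>i j. H (i + j)) a b"
    by (intro bivector_transform_cong) (auto simp: H_def mu_def)
  also have "\<dots> = (\<Sum>L\<le>n. z^L * ((- shift_exponent n r a - shift_exponent n r b) gchoose L)
                   * H (a + b + L*r))"
    by (rule bivector_transform_shift_matrix_hankel[OF r ab]) (simp add: H_def)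
  finally show ?thesis
    using ab by (auto simp: H_def X_def C_def algebra_simps intro!: sum.cong)
qed

lemma transforms_to_shift_matrix_mu:
  assumes r: "0 < r"
  shows "transforms_to n (shift_matrix n r z) (mu n k)
     (\<lambda>u a b. \<Sum>P\<le>n. z^P * ((-1)^P * ((- shift_mu_exponent n r k) gchoose P))
                       * mu n (k + P*r) u a b)"
  unfolding transforms_to_iff_bivector_transform
proof (intro allI ballI)
  fix u a b assume ab: "a \<in> {1..n}" "b \<in> {1..n}"
  define X where "X L = a + b - 1 + k + L*r" for L
  define C where "C = 3 * (real a + real b) - 2 * (real n + 2 - real k)"
  define A where "A = shift_mu_exponent n r k"
  define y where "y = - shift_exponent n r a - shift_exponent n r b"
  have "C = 2 * real r * A - 3 * real r * y"
    unfolding C_def A_def y_def shift_mu_exponent_def shift_exponent_pair[OF r]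
    using r by (simp add: field_simps)
  moreover have "- shift_exponent n r (X P) = y - A - 1 - real P" for P
    unfolding X_def y_def A_def using shift_exponent_mu_index[OF r] ab by simp
  ultimately have "(\<Sum>P=0..L. (-1)^P * ((-A) gchoose P) * (C + 2 * real P * real r)
        * ((- shift_exponent n r (X P)) gchoose (L - P))) = (C + 3 * real L * real r) * (y gchoose L)"
    for L by (simp only: gbinomial_shift_identity)
  note identity = this
  show "(\<Sum>P\<le>n. z^P * ((-1)^P * ((- shift_mu_exponent n r k) gchoose P))
                 * mu n (k + P*r) (\<lambda>c. \<Sum>i=1..n. shift_matrix n r z c i * u i) a b)
      = bivector_transform n (shift_matrix n r z) (mu n k u) a b"
    unfolding sum_mu_shift_matrix_image[OF r ab] bivector_transform_shift_matrix_mu[OF r ab]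
      X_def[symmetric] C_def[symmetric] A_def[symmetric] y_def[symmetric]
    by (simp only: identity)
qed

definition mu_comb :: "nat \<Rightarrow> (nat \<Rightarrow> real) \<Rightarrow> (nat \<Rightarrow> real) \<Rightarrow> nat \<Rightarrow> nat \<Rightarrow> real" where
  "mu_comb n c u i j = (\<Sum>k\<le>n. c k * mu n k u i j)"

lemma mu_eq_0_if_le: "i \<in> {1..n} \<Longrightarrow> j \<in> {1..n} \<Longrightarrow> n \<le> k \<Longrightarrow> mu n k u i j = 0"
  unfolding mu_def by auto

definition shifted_coeffs :: "nat \<Rightarrow> nat \<Rightarrow> real \<Rightarrow> (nat \<Rightarrow> real) \<Rightarrow> nat \<Rightarrow> real" where
  "shifted_coeffs n r z c j = (\<Sum>k\<le>n. \<Sum>P\<le>n. if k + P*r = j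
     then c k * (z^P * ((-1)^P * ((- shift_mu_exponent n r k) gchoose P))) else 0)"

lemma transforms_to_shift_matrix_mu_comb:
  assumes "0 < r"
  shows "transforms_to n (shift_matrix n r z) (mu_comb n c) (mu_comb n (shifted_coeffs n r z c))"
proof (rule transforms_to_cong)
  define F where "F k P = c k * (z^P * ((-1)^P * ((- shift_mu_exponent n r k) gchoose P)))" for k P
  show "transforms_to n (shift_matrix n r z) (mu_comb n c)
     (\<lambda>u a b. \<Sum>k\<le>n. c k * (\<Sum>P\<le>n. z^P * ((-1)^P * ((- shift_mu_exponent n r k) gchoose P))
                       * mu n (k + P*r) u a b))"
    unfolding mu_comb_def[abs_def] using transforms_to_shift_matrix_mu[OF assms]
    by (rule transforms_to_sum)
  fix u a b assume ab: "a \<in> {1..n}" "b \<in> {1..n}"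
  have "mu_comb n (shifted_coeffs n r z c) u a b
      = (\<Sum>j\<le>n. \<Sum>k\<le>n. \<Sum>P\<le>n. if k + P*r = j then F k P * mu n j u a b else 0)"
    unfolding mu_comb_def shifted_coeffs_def F_def sum_distrib_right by (intro sum.cong refl) simp
  also have "\<dots> = (\<Sum>k\<le>n. \<Sum>P\<le>n. \<Sum>j\<le>n. if k + P*r = j then F k P * mu n j u a b else 0)"
    by (subst sum.swap, rule sum.cong[OF refl], rule sum.swap)
  also have "\<dots> = (\<Sum>k\<le>n. \<Sum>P\<le>n. F k P * mu n (k + P*r) u a b)"
    using mu_eq_0_if_le[OF ab] by (intro sum.cong refl) (simp add: sum.delta')
  also have "\<dots> = (\<Sum>k\<le>n. c k * (\<Sum>P\<le>n. z^P * ((-1)^P * ((- shift_mu_exponent n r k) gchoose P))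
                       * mu n (k + P*r) u a b))"
    unfolding F_def by (simp add: sum_distrib_left mult_ac)
  finally show "(\<Sum>k\<le>n. c k * (\<Sum>P\<le>n. z^P * ((-1)^P * ((- shift_mu_exponent n r k) gchoose P))
                       * mu n (k + P*r) u a b)) = mu_comb n (shifted_coeffs n r z c) u a b"
    by simp
qed

lemma shifted_coeffs_eq_sum_solutions:
  "shifted_coeffs n r z c j = (\<Sum>(k,P)\<in>{(k,P) \<in> {..n} \<times> {..n}. k + P*r = j}.
     c k * (z^P * ((-1)^P * ((- shift_mu_exponent n r k) gchoose P))))"
  unfolding shifted_coeffs_def sum.cartesian_product
  by (rule sum.mono_neutral_cong_right) (auto split: if_splits)

lemma shifted_coeffs_below:
  assumes "0 < r" "j < r" "j \<le> n"
  shows "shifted_coeffs n r z c j = c j"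
proof -
  have "P = 0" if "k + P*r = j" for k P
    using that assms by (cases P) auto
  then have "{(k,P) \<in> {..n} \<times> {..n}. k + P*r = j} = {(j, 0)}"
    using assms by auto
  then show ?thesis
    by (simp add: shifted_coeffs_eq_sum_solutions)
qed

lemma shifted_coeffs_at:
  assumes "0 < r" "r \<le> n"
  shows "shifted_coeffs n r z c r = c r + c 0 * z * shift_mu_exponent n r 0"
proof -
  have "(k, P) = (r, 0) \<or> (k, P) = (0, 1)" if "k + P*r = r" for k P
    using that assms by (cases P) auto
  then have "{(k,P) \<in> {..n} \<times> {..n}. k + P*r = r} = {(r, 0), (0, 1)}"
    using assms by auto
  then show ?thesis
    using assms by (simp add: shifted_coeffs_eq_sum_solutions)
qed

lemma shift_mu_exponent_0_eq_0_iff: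
  assumes "0 < r"
  shows "shift_mu_exponent n r 0 = 0 \<longleftrightarrow> n = 3*r + 1"
proof -
  have "shift_mu_exponent n r 0 = 0 \<longleftrightarrow> real n = real (3*r + 1)"
    using assms unfolding shift_mu_exponent_def by auto
  then show ?thesis
    by (simp only: of_nat_eq_iff)
qed

lemma eliminate_mu_coefficient:
  assumes "0 < r" "r \<le> n" "n \<noteq> 3*r + 1" "c 0 = 1"
  obtains A d where "orthogonal_g n A" "transforms_to n A (mu_comb n c) (mu_comb n d)"
    "\<forall>j<r. d j = c j" "d r = 0"
proof
  define z where "z = - c r / shift_mu_exponent n r 0"
  show "orthogonal_g n (shift_matrix n r z)"
    using assms(1) by (rule orthogonal_g_shift_matrix)
  show "transforms_to n (shift_matrix n r z) (mu_comb n c) (mu_comb n (shifted_coeffs n r z c))"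
    using assms(1) by (rule transforms_to_shift_matrix_mu_comb)
  show "\<forall>j<r. shifted_coeffs n r z c j = c j"
    using assms(1,2) by (auto intro: shifted_coeffs_below)
  show "shifted_coeffs n r z c r = 0"
    using assms shift_mu_exponent_0_eq_0_iff[OF assms(1), of n]
    by (simp add: shifted_coeffs_at z_def)
qed

lemma eliminate_mu_coefficients:
  assumes "orthogonal_g n A0" "transforms_to n A0 S (mu_comb n c)" "c 0 = 1"
    and "\<And>r. n = 3*r + 1 \<Longrightarrow> r = e" and "R \<le> n"
  shows "\<exists>A d. orthogonal_g n A \<and> transforms_to n A S (mu_comb n d) \<and> d 0 = 1 \<and>
           (\<forall>j. 0 < j \<and> j < R \<and> j \<noteq> e \<longrightarrow> d j = 0)"
  using assms(5)
proof (induction R)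
  case 0
  then show ?case using assms(1-3) by blast
next
  case (Suc R)
  then obtain A d where Ad: "orthogonal_g n A" "transforms_to n A S (mu_comb n d)" "d 0 = 1"
    "\<forall>j. 0 < j \<and> j < R \<and> j \<noteq> e \<longrightarrow> d j = 0" by auto
  show ?case
  proof (cases "R = 0 \<or> R = e")
    case True
    then show ?thesis using Ad by (metis less_Suc_eq not_less0)
  next
    case False
    then have "0 < R" "n \<noteq> 3*R + 1" "R \<le> n" using assms(4) Suc.prems by auto
    then obtain B d' where Bd: "orthogonal_g n B" "transforms_to n B (mu_comb n d) (mu_comb n d')"
      "\<forall>j<R. d' j = d j" "d' R = 0"
      using eliminate_mu_coefficient Ad(3) by blast
    have "orthogonal_g n (matrix_mult n B A)"
      using Ad(1) Bd(1) by (rule orthogonal_g_matrix_mult)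
    moreover have "transforms_to n (matrix_mult n B A) S (mu_comb n d')"
      using Ad(2) Bd(2) by (rule transforms_to_matrix_mult)
    moreover have "d' 0 = 1" using Bd(3) Ad(3) \<open>0 < R\<close> by simp
    moreover have "\<forall>j. 0 < j \<and> j < Suc R \<and> j \<noteq> e \<longrightarrow> d' j = 0"
      using Bd(3,4) Ad(4) by (metis less_Suc_eq)
    ultimately show ?thesis by blast
  qed
qed

lemma mu_comb_reduced:
  assumes "d 0 = 1" "\<forall>j. 0 < j \<and> j < n \<and> j \<noteq> e \<longrightarrow> d j = 0"
    and "a \<in> {1..n}" "b \<in> {1..n}"
  shows "mu_comb n d u a b = mu n 0 u a b + (if 0 < e \<and> e < n then d e * mu n e u a b else 0)"
proof -
  have "mu_comb n d u a b = (\<Sum>k\<le>n. (if k = 0 then mu n 0 u a b else 0)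
      + (if k = e \<and> 0 < e \<and> e < n then d e * mu n e u a b else 0))"
    unfolding mu_comb_def
  proof (intro sum.cong refl)
    fix k assume "k \<in> {..n}"
    then show "d k * mu n k u a b = (if k = 0 then mu n 0 u a b else 0)
        + (if k = e \<and> 0 < e \<and> e < n then d e * mu n e u a b else 0)"
      using assms mu_eq_0_if_le[OF assms(3,4), of n u] by (cases "k < n") auto
  qed
  also have "\<dots> = mu n 0 u a b + (if 0 < e \<and> e < n then d e * mu n e u a b else 0)"
    by (simp add: sum.distrib)
  finally show ?thesis .
qed

lemma normalize_leading_coefficient:
  assumes "2 \<le> n" "\<xi> 0 \<noteq> 0"
  obtains A c where "orthogonal_g n A" "c 0 = 1"
    "transforms_to n A (\<lambda>u i j. \<Sum>k=0..n-2. \<xi> k * mu n k u i j) (mu_comb n c)"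
proof -
  define \<rho> where "\<rho> = 1 / \<xi> 0"
  define \<tau> where "\<tau> = root (n-1) ((\<xi> 0)^2)"
  define c where "c k = (if k \<le> n - 2 then \<xi> k * (\<rho> / \<tau>^k) else 0)" for k
  have "0 < n - 1" using assms(1) by simp
  then have "0 < \<tau>" "\<tau>^(n-1) = (\<xi> 0)^2"
    unfolding \<tau>_def using assms(2) by (simp_all add: real_root_pow_pos2)
  then have "orthogonal_g n (diag_scaling \<rho> \<tau>)"
    unfolding \<rho>_def using assms(2) by (intro orthogonal_g_diag_scaling) (simp add: power_divide)
  moreover have "c 0 = 1"
    unfolding c_def \<rho>_def using assms(2) by simp
  moreover have "transforms_to n (diag_scaling \<rho> \<tau>) (\<lambda>u i j. \<Sum>k=0..n-2. \<xi> k * mu n k u i j)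
      (\<lambda>u i j. \<Sum>k=0..n-2. \<xi> k * (\<rho> / \<tau>^k * mu n k u i j))"
    using \<open>0 < \<tau>\<close> by (intro transforms_to_sum transforms_to_diag_scaling_mu) simp
  then have "transforms_to n (diag_scaling \<rho> \<tau>) (\<lambda>u i j. \<Sum>k=0..n-2. \<xi> k * mu n k u i j)
      (mu_comb n c)"
  proof (rule transforms_to_cong)
    fix u a b
    have "mu_comb n c u a b = (\<Sum>k\<le>n. if k \<le> n - 2 then \<xi> k * (\<rho> / \<tau>^k) * mu n k u a b else 0)"
      unfolding mu_comb_def c_def by (intro sum.cong refl) simp
    also have "\<dots> = (\<Sum>k\<in>{k \<in> {..n}. k \<le> n - 2}. \<xi> k * (\<rho> / \<tau>^k) * mu n k u a b)"
      by (rule sum.inter_filter[symmetric]) simp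
    also have "{k \<in> {..n}. k \<le> n - 2} = {0..n-2}"
      by auto
    finally show "(\<Sum>k=0..n-2. \<xi> k * (\<rho> / \<tau>^k * mu n k u a b)) = mu_comb n c u a b"
      by (simp add: mult.assoc)
  qed
  ultimately show thesis
    by (rule that)
qed

lemma mu_normal_form:
  assumes "2 \<le> n" "\<xi> 0 \<noteq> 0" "\<And>r. n = 3*r + 1 \<Longrightarrow> r = e"
  obtains A \<kappa> where "orthogonal_g n A"
    "transforms_to n A (\<lambda>u i j. \<Sum>k=0..n-2. \<xi> k * mu n k u i j)
       (\<lambda>u i j. mu n 0 u i j + (if 0 < e \<and> e < n then \<kappa> * mu n e u i j else 0))"
proof -
  let ?S = "\<lambda>u i j. \<Sum>k=0..n-2. \<xi> k * mu n k u i j"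
  obtain A0 c where "orthogonal_g n A0" "c 0 = 1" "transforms_to n A0 ?S (mu_comb n c)"
    using normalize_leading_coefficient[of n \<xi>] assms(1,2) by blast
  then obtain A d where A: "orthogonal_g n A" "transforms_to n A ?S (mu_comb n d)"
    and d: "d 0 = 1" "\<forall>j. 0 < j \<and> j < n \<and> j \<noteq> e \<longrightarrow> d j = 0"
    using eliminate_mu_coefficients[of n A0 ?S c e n] assms(3) by blast
  have "transforms_to n A ?S
      (\<lambda>u i j. mu n 0 u i j + (if 0 < e \<and> e < n then d e * mu n e u i j else 0))"
    using A(2) by (rule transforms_to_cong) (rule mu_comb_reduced[OF d])
  with A(1) show thesis
    by (rule that)
qed

theorem proposition4:
  fixes n :: nat and \<xi> :: "nat \<Rightarrow> real"
  assumes "n \<ge> 2" and "\<xi> 0 \<noteq> 0"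
  defines "S0 \<equiv> (\<lambda>u i j. \<Sum>k=0..n-2. \<xi> k * mu n k u i j)"
  shows "(n mod 3 \<noteq> 1 \<longrightarrow>
            (\<exists>A. orthogonal_g n A \<and> transforms_to n A S0 (mu n 0)))
       \<and> (n mod 3 = 1 \<and> n \<noteq> 4 \<longrightarrow>
            (\<exists>A \<kappa>. orthogonal_g n A \<and>
               transforms_to n A S0 (\<lambda>u i j. mu n 0 u i j + \<kappa> * mu n ((n - 1) div 3) u i j)))"
proof (intro conjI impI)
  assume "n mod 3 \<noteq> 1"
  \<comment> \<open>no coefficient is exceptional, so \<open>0\<close> serves as a dummy value of \<open>e\<close>\<close>
  then have "n = 3*r + 1 \<Longrightarrow> r = 0" for r
    by presburger
  then obtain A \<kappa> where A: "orthogonal_g n A" and T: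
    "transforms_to n A S0 (\<lambda>u i j. mu n 0 u i j + (if 0 < (0::nat) \<and> 0 < n then \<kappa> * mu n 0 u i j else 0))"
    using mu_normal_form[of n \<xi> 0] assms(1,2) unfolding S0_def by blast
  from T have "transforms_to n A S0 (mu n 0)"
    by (rule transforms_to_cong) simp
  with A show "\<exists>A. orthogonal_g n A \<and> transforms_to n A S0 (mu n 0)"
    by blast
next
  assume "n mod 3 = 1 \<and> n \<noteq> 4"
  \<comment> \<open>the argument does not need \<open>n \<noteq> 4\<close>\<close>
  then have e: "0 < (n - 1) div 3" "(n - 1) div 3 < n" "n = 3*r + 1 \<Longrightarrow> r = (n - 1) div 3" for r
    using assms(1) by presburger+
  then obtain A \<kappa> where A: "orthogonal_g n A" and T: "transforms_to n A S0 (\<lambda>u i j. mu n 0 u i j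
      + (if 0 < (n - 1) div 3 \<and> (n - 1) div 3 < n then \<kappa> * mu n ((n - 1) div 3) u i j else 0))"
    using mu_normal_form[of n \<xi> "(n - 1) div 3"] assms(1,2) e(3) unfolding S0_def by blast
  from T have "transforms_to n A S0 (\<lambda>u i j. mu n 0 u i j + \<kappa> * mu n ((n - 1) div 3) u i j)"
    by (rule transforms_to_cong) (use e(1,2) in simp)
  with A show "\<exists>A \<kappa>. orthogonal_g n A \<and>
      transforms_to n A S0 (\<lambda>u i j. mu n 0 u i j + \<kappa> * mu n ((n - 1) div 3) u i j)"
    by blast
qed

end
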